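(* Let $K$ be a non-archimedean local field with $\mathrm{char}(K)\neq 2$, let $i=\sqrt{-1}$, and let $S$ be the set of all quadruples $(A,B,C,D)\in\mathrm{SL}_2(K(i))^4$ such that $A$ is diagonal and $ABA^{-1}B^{-1}CDC^{-1}D^{-1}=-I$. For every word $w$ in the free group $F_4$ of rank four, there exists $(A,B,C,D)\in S$ such that $\pi w(A,B,C,D)$ does not have order $2$.
   Context: For a word $w\in F_4$ and $(A,B,C,D)\in\mathrm{SL}_2(K(i))^4$, $w(A,B,C,D)$ is the evaluation of $w$ at $(A,B,C,D)$, and $\pi w(A,B,C,D)$ is its image in $\mathrm{PSL}_2(K(i))$ under the quotient map $\pi$. *)

theory Defs
  imports "HOL-Analysis.Analysis" "HOL-Library.Numeral_Type"
begin

text \<open>A non-archimedean local field: a field complete with respect to a (normalised)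
 discrete valuation v (defined on nonzero elements, surjective onto the integers),
 whose residue field is finite. The valuation v is only meaningful on nonzero
 elements; closeness "x = y or v(x - y) >= N" is used for the metric notions.\<close>

definition val_close :: "('k::field \<Rightarrow> int) \<Rightarrow> int \<Rightarrow> 'k \<Rightarrow> 'k \<Rightarrow> bool" where
  "val_close v N x y \<longleftrightarrow> x = y \<or> v (x - y) \<ge> N"

definition na_local_field :: "('k::field \<Rightarrow> int) \<Rightarrow> bool" where
  "na_local_field v \<longleftrightarrow>
     (\<forall>x y. x \<noteq> 0 \<longrightarrow> y \<noteq> 0 \<longrightarrow> v (x * y) = v x + v y)
   \<and> (\<forall>x y. x \<noteq> 0 \<longrightarrow> y \<noteq> 0 \<longrightarrow> x + y \<noteq> 0 \<longrightarrow> v (x + y) \<ge> min (v x) (v y))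
   \<and> (\<forall>n. \<exists>x. x \<noteq> 0 \<and> v x = n)
   \<and> (\<forall>s :: nat \<Rightarrow> 'k. (\<forall>N. \<exists>M. \<forall>m\<ge>M. \<forall>n\<ge>M. val_close v N (s m) (s n)) \<longrightarrow>
          (\<exists>l. \<forall>N. \<exists>M. \<forall>n\<ge>M. val_close v N (s n) l))
   \<and> (\<exists>F. finite F \<and> F \<subseteq> {x. x = 0 \<or> v x \<ge> 0} \<and>
          (\<forall>x. (x = 0 \<or> v x \<ge> 0) \<longrightarrow> (\<exists>y\<in>F. val_close v 1 x y)))"

definition is_K_adjoin_i :: "('k::field \<Rightarrow> 'l::field) \<Rightarrow> 'l \<Rightarrow> bool" where
  "is_K_adjoin_i emb i \<longleftrightarrow>
     emb 1 = 1 \<and> (\<forall>x y. emb (x + y) = emb x + emb y) \<and> (\<forall>x y. emb (x * y) = emb x * emb y)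
   \<and> i ^ 2 = - 1
   \<and> (\<forall>z. \<exists>a b. z = emb a + emb b * i)"

type_synonym 'a mat2 = "'a ^ 2 ^ 2"

definition SL2 :: "'a::field mat2 set" where
  "SL2 = {A. det A = 1}"

abbreviation minv :: "'a::field mat2 \<Rightarrow> 'a mat2" where
  "minv A \<equiv> matrix_inv A"

definition is_diagonal2 :: "'a::field mat2 \<Rightarrow> bool" where
  "is_diagonal2 A \<longleftrightarrow> A $ 1 $ 2 = 0 \<and> A $ 2 $ 1 = 0"

definition S_set :: "('a::field mat2 \<times> 'a mat2 \<times> 'a mat2 \<times> 'a mat2) set" where
  "S_set = {(A,B,C,D). A \<in> SL2 \<and> B \<in> SL2 \<and> C \<in> SL2 \<and> D \<in> SL2 \<and> is_diagonal2 A \<and>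
     A ** B ** minv A ** minv B ** C ** D ** minv C ** minv D = - mat 1}"

text \<open>Words in the free group F_4 on generators indexed by the type 4: a word is a
 list of letters (generator, exponent sign), True meaning exponent +1, False -1.
 Every element of F_4 is represented by such a word, and evaluation is well defined
 on F_4, so quantifying over all words is the same as quantifying over F_4.\<close>
type_synonym word4 = "(4 \<times> bool) list"

fun eval_word :: "word4 \<Rightarrow> (4 \<Rightarrow> 'a::field mat2) \<Rightarrow> 'a mat2" where
  "eval_word [] g = mat 1"
| "eval_word ((j, True) # w) g = g j ** eval_word w g"
| "eval_word ((j, False) # w) g = minv (g j) ** eval_word w g"

definition gens4 :: "'a mat2 \<Rightarrow> 'a mat2 \<Rightarrow> 'a mat2 \<Rightarrow> 'a mat2 \<Rightarrow> 4 \<Rightarrow> 'a mat2" where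
  "gens4 A B C D j = (if j = 0 then A else if j = 1 then B else if j = 2 then C else D)"

text \<open>The quotient map SL_2 -> PSL_2 = SL_2/{I,-I}: X is sent to its coset {X,-X}.
 Multiplication of cosets is induced by matrix multiplication.\<close>
definition psl_proj :: "'a::field mat2 \<Rightarrow> 'a mat2 set" where
  "psl_proj X = {X, - X}"

definition psl_order2 :: "'a::field mat2 \<Rightarrow> bool" where
  "psl_order2 X \<longleftrightarrow> psl_proj X \<noteq> psl_proj (mat 1) \<and> psl_proj (X ** X) = psl_proj (mat 1)"

end

theory Submission
  imports Defs
begin

text \<open>The quaternion group Q8 = {\<plusminus>1, \<plusminus>P, \<plusminus>Q, \<plusminus>PQ} with P = diag(i, -i) and Q = [[0,1],[-1,0]]
  lies in SL_2(K(i)), and its image in PSL_2 is the Klein four-group V = (Z/2)^2, in which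
  the commutator of two elements is -1 exactly when their images are linearly independent.
  Hence any assignment of generators to images in V whose commutator pairings on the pairs
  (A, B) and (C, D) differ, with A \<in> {\<plusminus>1, \<plusminus>P}, lifts to a point of S. The image of w in V
  only depends on the parities of the numbers of occurrences of each generator in w, and
  a short case distinction on these parities yields such an assignment that kills w; then
  w evaluates to \<plusminus>1, which has order 1 in PSL_2.\<close>

definition mk_mat2 :: "'a::field \<Rightarrow> 'a \<Rightarrow> 'a \<Rightarrow> 'a \<Rightarrow> 'a mat2" where
  "mk_mat2 a b c d = (\<chi> r s. if r = 1 then (if s = 1 then a else b) else (if s = 1 then c else d))"

lemma mk_mat2_nth [simp]:
  "mk_mat2 a b c d $ 1 $ 1 = a" "mk_mat2 a b c d $ 1 $ 2 = b"
  "mk_mat2 a b c d $ 2 $ 1 = c" "mk_mat2 a b c d $ 2 $ 2 = d"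
  by (simp_all add: mk_mat2_def)

lemma mk_mat2_mult:
  "mk_mat2 a b c d ** mk_mat2 a' b' c' d' =
     mk_mat2 (a * a' + b * c') (a * b' + b * d') (c * a' + d * c') (c * b' + d * d')"
  by (simp add: matrix_matrix_mult_def vec_eq_iff forall_2 sum_2 mk_mat2_def)

lemma mk_mat2_uminus: "- mk_mat2 a b c d = mk_mat2 (- a) (- b) (- c) (- d)"
  by (simp add: vec_eq_iff forall_2 mk_mat2_def)

lemma mk_mat2_eq_iff:
  "mk_mat2 a b c d = mk_mat2 a' b' c' d' \<longleftrightarrow> a = a' \<and> b = b' \<and> c = c' \<and> d = d'"
  by (auto simp add: vec_eq_iff forall_2 mk_mat2_def)

lemma mat1_eq_mk_mat2: "(mat 1 :: 'a::field mat2) = mk_mat2 1 0 0 1"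
  by (simp add: vec_eq_iff forall_2 mk_mat2_def mat_def)

lemma matrix_mul_uminus_right: "(A :: 'a::field mat2) ** (- B) = - (A ** B)"
  by (simp add: matrix_matrix_mult_def vec_eq_iff sum_negf)

lemma matrix_mul_uminus_left: "(- A :: 'a::field mat2) ** B = - (A ** B)"
  by (simp add: matrix_matrix_mult_def vec_eq_iff sum_negf)

lemma matrix_inv_eq:
  fixes A B :: "'a::field mat2"
  assumes "A ** B = mat 1" "B ** A = mat 1"
  shows "matrix_inv A = B"
proof -
  have "A ** matrix_inv A = mat 1 \<and> matrix_inv A ** A = mat 1"
    unfolding matrix_inv_def by (rule someI[of _ B]) (use assms in blast)
  then have left_inverse: "matrix_inv A ** A = mat 1" ..
  have "matrix_inv A = matrix_inv A ** (A ** B)"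
    using assms by simp
  also have "\<dots> = B"
    by (simp add: matrix_mul_assoc left_inverse)
  finally show ?thesis .
qed

lemma psl_proj_eq_iff: "psl_proj X = psl_proj Y \<longleftrightarrow> X = Y \<or> X = - Y"
  by (auto simp add: psl_proj_def doubleton_eq_iff)

lemma psl_proj_mult:
  assumes "psl_proj X = psl_proj X'" "psl_proj Y = psl_proj Y'"
  shows "psl_proj (X ** Y) = psl_proj (X' ** Y')"
  using assms by (auto simp add: psl_proj_eq_iff matrix_mul_uminus_left matrix_mul_uminus_right)

lemma not_psl_order2_if_trivial: "psl_proj X = psl_proj (mat 1) \<Longrightarrow> \<not> psl_order2 X"
  by (simp add: psl_order2_def)

lemma gens4_eta: "gens4 (g 0) (g 1) (g 2) (g 3) = g"
proof
  fix j :: 4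
  show "gens4 (g 0) (g 1) (g 2) (g 3) j = g j"
    using exhaust_4[of j] by (auto simp add: gens4_def)
qed

text \<open>\<open>quat_unit i x y\<close> is P^x Q^y, so that its class in PSL_2 corresponds to the
  point (x, y) of V with bool read as Z/2.\<close>

definition quat_unit :: "'a::field \<Rightarrow> bool \<Rightarrow> bool \<Rightarrow> 'a mat2" where
  "quat_unit i x y =
     (if x then (if y then mk_mat2 0 i i 0 else mk_mat2 i 0 0 (- i))
      else (if y then mk_mat2 0 1 (- 1) 0 else mk_mat2 1 0 0 1))"

definition anticommuting :: "bool \<Rightarrow> bool \<Rightarrow> bool \<Rightarrow> bool \<Rightarrow> bool" where
  "anticommuting x y x' y' \<longleftrightarrow> (x \<and> y') \<noteq> (y \<and> x')"

lemma quat_unit_False_False: "quat_unit i False False = mat 1"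
  by (simp add: quat_unit_def mat1_eq_mk_mat2)

lemma det_quat_unit: "i * i = -1 \<Longrightarrow> det (quat_unit i x y) = 1"
  by (cases x; cases y) (simp_all add: quat_unit_def det_2)

lemma matrix_inv_quat_unit:
  assumes "i * i = -1"
  shows "matrix_inv (quat_unit i x y) = (if x \<or> y then - quat_unit i x y else quat_unit i x y)"
  by (rule matrix_inv_eq; cases x; cases y)
    (simp_all add: assms quat_unit_def mk_mat2_mult mk_mat2_uminus mk_mat2_eq_iff mat1_eq_mk_mat2)

lemma psl_proj_quat_unit_mult:
  assumes "i * i = -1"
  shows "psl_proj (quat_unit i x y ** quat_unit i x' y')
       = psl_proj (quat_unit i (x \<noteq> x') (y \<noteq> y'))"
  unfolding psl_proj_eq_iff using assms
  by (cases x; cases y; cases x'; cases y')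
    (simp_all add: quat_unit_def mk_mat2_mult mk_mat2_uminus mk_mat2_eq_iff)

lemma psl_proj_matrix_inv_quat_unit:
  "i * i = -1 \<Longrightarrow> psl_proj (matrix_inv (quat_unit i x y)) = psl_proj (quat_unit i x y)"
  by (simp add: matrix_inv_quat_unit psl_proj_eq_iff)

lemma commutator_quat_unit:
  assumes "i * i = -1"
  shows "quat_unit i x y ** quat_unit i x' y' ** matrix_inv (quat_unit i x y) **
           matrix_inv (quat_unit i x' y') = (if anticommuting x y x' y' then - mat 1 else mat 1)"
  unfolding matrix_inv_quat_unit[OF assms] anticommuting_def mat1_eq_mk_mat2 using assms
  by (cases x; cases y; cases x'; cases y')
    (simp_all add: quat_unit_def mk_mat2_mult mk_mat2_uminus mk_mat2_eq_iff)

lemma quat_units_in_S_set: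
  fixes a b :: "4 \<Rightarrow> bool"
  assumes "i * i = -1" and "\<not> b 0"
    and "anticommuting (a 0) (b 0) (a 1) (b 1) \<noteq> anticommuting (a 2) (b 2) (a 3) (b 3)"
  shows "(quat_unit i (a 0) (b 0), quat_unit i (a 1) (b 1), quat_unit i (a 2) (b 2),
          quat_unit i (a 3) (b 3)) \<in> S_set"
proof -
  let ?q = "\<lambda>j. quat_unit i (a j) (b j)"
  have "?q 0 ** ?q 1 ** minv (?q 0) ** minv (?q 1) ** ?q 2 ** ?q 3 ** minv (?q 2) ** minv (?q 3)
      = (?q 0 ** ?q 1 ** minv (?q 0) ** minv (?q 1)) ** (?q 2 ** ?q 3 ** minv (?q 2) ** minv (?q 3))"
    by (simp add: matrix_mul_assoc)
  also have "\<dots> = - mat 1"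
    using assms(3) by (simp add: commutator_quat_unit[OF assms(1)] matrix_mul_uminus_left)
  finally have "?q 0 ** ?q 1 ** minv (?q 0) ** minv (?q 1) ** ?q 2 ** ?q 3 ** minv (?q 2) **
      minv (?q 3) = - mat 1" .
  moreover have "is_diagonal2 (?q 0)"
    using assms(2) by (simp add: is_diagonal2_def quat_unit_def)
  ultimately show ?thesis
    using assms(1) by (simp add: S_set_def SL2_def det_quat_unit)
qed

text \<open>\<open>letter_parity a w\<close> is the image of w under the homomorphism F_4 \<rightarrow> Z/2 sending
  the j-th generator to a j.\<close>

fun letter_parity :: "(4 \<Rightarrow> bool) \<Rightarrow> word4 \<Rightarrow> bool" where
  "letter_parity a [] = False"
| "letter_parity a (l # w) = (a (fst l) \<noteq> letter_parity a w)"

lemma letter_parity_xor: "letter_parity (\<lambda>j. a j \<noteq> b j) w = (letter_parity a w \<noteq> letter_parity b w)"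
  by (induction w) auto

lemma letter_parity_conj_const: "letter_parity (\<lambda>j. c \<and> a j) w = (c \<and> letter_parity a w)"
  by (induction w) auto

lemma psl_proj_eval_word_quat_units:
  assumes "i * i = -1"
  shows "psl_proj (eval_word w (\<lambda>j. quat_unit i (a j) (b j)))
       = psl_proj (quat_unit i (letter_parity a w) (letter_parity b w))"
proof (induction w)
  case Nil
  show ?case by (simp add: quat_unit_False_False)
next
  case (Cons l w)
  obtain j e where l: "l = (j, e)" by (cases l)
  let ?g = "\<lambda>j. quat_unit i (a j) (b j)"
  have "eval_word (l # w) ?g = (if e then ?g j else minv (?g j)) ** eval_word w ?g"
    using l by (cases e) simp_all
  moreover have "psl_proj (if e then ?g j else minv (?g j)) = psl_proj (?g j)"
    using psl_proj_matrix_inv_quat_unit[OF assms] by simp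
  ultimately have "psl_proj (eval_word (l # w) ?g)
      = psl_proj (?g j ** quat_unit i (letter_parity a w) (letter_parity b w))"
    using Cons.IH psl_proj_mult by metis
  then show ?case
    using l by (simp add: psl_proj_quat_unit_mult[OF assms])
qed

lemma killing_assignment_exists:
  "\<exists>a b :: 4 \<Rightarrow> bool. \<not> b 0
     \<and> anticommuting (a 0) (b 0) (a 1) (b 1) \<noteq> anticommuting (a 2) (b 2) (a 3) (b 3)
     \<and> \<not> letter_parity a w \<and> \<not> letter_parity b w"
proof -
  define p where "p j = letter_parity (\<lambda>k. k = j) w" for j :: 4
  \<comment> \<open>If generator 2 (or 3) occurs an odd number of times, giving it the image
    (p 0, p 1) cancels the contribution of generators 0 and 1.\<close>
  consider "p 2" | "\<not> p 2" "p 3" | "\<not> p 2" "\<not> p 3" by blast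
  then show ?thesis
  proof cases
    case 1
    show ?thesis
      by (rule exI[of _ "\<lambda>j. (j = 0) \<noteq> (p 0 \<and> j = 2)"],
          rule exI[of _ "\<lambda>j. (j = 1) \<noteq> (p 1 \<and> j = 2)"])
        (use 1 in \<open>simp only: letter_parity_xor letter_parity_conj_const,
                  simp add: anticommuting_def p_def[symmetric]\<close>)
  next
    case 2
    show ?thesis
      by (rule exI[of _ "\<lambda>j. (j = 0) \<noteq> (p 0 \<and> j = 3)"],
          rule exI[of _ "\<lambda>j. (j = 1) \<noteq> (p 1 \<and> j = 3)"])
        (use 2 in \<open>simp only: letter_parity_xor letter_parity_conj_const,
                  simp add: anticommuting_def p_def[symmetric]\<close>)
  next
    case 3
    show ?thesis
      by (rule exI[of _ "\<lambda>j. j = 2"], rule exI[of _ "\<lambda>j. j = 3"])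
        (use 3 in \<open>simp add: anticommuting_def p_def[symmetric]\<close>)
  qed
qed

theorem lemma4p3:
  fixes v :: "'k::field \<Rightarrow> int" and emb :: "'k \<Rightarrow> 'l::field" and i :: 'l
  assumes "na_local_field v"
    and "(2::'k) \<noteq> 0"
    and "is_K_adjoin_i emb i"
  shows "\<forall>w :: word4. \<exists>A B C D :: 'l mat2. (A, B, C, D) \<in> S_set \<and>
           \<not> psl_order2 (eval_word w (gens4 A B C D))"
proof
  fix w :: word4
  have i2: "i * i = -1"
    using assms(3) by (simp add: is_K_adjoin_i_def power2_eq_square)
  obtain a b :: "4 \<Rightarrow> bool" where "\<not> b 0"
    and comm: "anticommuting (a 0) (b 0) (a 1) (b 1) \<noteq> anticommuting (a 2) (b 2) (a 3) (b 3)"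
    and kill: "\<not> letter_parity a w" "\<not> letter_parity b w"
    using killing_assignment_exists by blast
  let ?q = "\<lambda>j. quat_unit i (a j) (b j)"
  have "(?q 0, ?q 1, ?q 2, ?q 3) \<in> S_set"
    using quat_units_in_S_set[OF i2 \<open>\<not> b 0\<close> comm] .
  moreover have "\<not> psl_order2 (eval_word w (gens4 (?q 0) (?q 1) (?q 2) (?q 3)))"
    unfolding gens4_eta[of ?q]
    by (rule not_psl_order2_if_trivial)
      (simp add: psl_proj_eval_word_quat_units[OF i2] kill quat_unit_False_False)
  ultimately show "\<exists>A B C D :: 'l mat2. (A, B, C, D) \<in> S_set \<and>
      \<not> psl_order2 (eval_word w (gens4 A B C D))"
    by blast
qed

end
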